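(* Let $\tau>\frac{3+\sqrt{17}}{2}$. Then for (Lebesgue) almost every $\gamma>0$, the set $D_{\gamma,\tau}$ is a Cantor set.
   Context: For $x\in\mathbb{R}$, $\|x\|:=\min_{p\in\mathbb{Z}}|x-p|$. Let $\mathbb{N}=\{1,2,3,\dots\}$. For $\gamma>0$ and $\tau\ge 1$, $D_{\gamma,\tau}:=\{\alpha\in(0,1):\ \|q\alpha\|\ge \gamma/q^{\tau}\ \text{for all } q\in\mathbb{N}\}$. A set $X\subset\mathbb{R}$ is a Cantor set if it is closed, totally disconnected and perfect (every point of $X$ is an accumulation point of $X$). *)

theory Defs
  imports "HOL-Analysis.Analysis"
begin

definition dist_int :: "real \<Rightarrow> real" where
  "dist_int x = (INF p::int. \<bar>x - real_of_int p\<bar>)"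

definition Dset :: "real \<Rightarrow> real \<Rightarrow> real set" where
  "Dset \<gamma> \<tau> = {\<alpha>. 0 < \<alpha> \<and> \<alpha> < 1 \<and>
      (\<forall>q::nat. q \<ge> 1 \<longrightarrow> dist_int (real q * \<alpha>) \<ge> \<gamma> / (real q powr \<tau>))}"

definition totally_disconnected :: "real set \<Rightarrow> bool" where
  "totally_disconnected X \<longleftrightarrow> (\<forall>S. S \<subseteq> X \<and> connected S \<longrightarrow> (\<exists>a. S \<subseteq> {a}))"

definition perfect_set :: "real set \<Rightarrow> bool" where
  "perfect_set X \<longleftrightarrow> (\<forall>x\<in>X. x islimpt X)"

definition cantor_set :: "real set \<Rightarrow> bool" where
  "cantor_set X \<longleftrightarrow> closed X \<and> totally_disconnected X \<and> perfect_set X"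

end

theory Submission
  imports Defs
begin

text \<open>
  Closedness and total disconnectedness are elementary: \<open>D\<^sub>\<gamma>\<^sub>,\<^sub>\<tau>\<close> is an intersection
  of closed sets and contains no rational number. For perfectness, a point \<open>\<alpha>\<close> isolated in
  \<open>D\<^sub>\<gamma>\<^sub>,\<^sub>\<tau>\<close> is its only point in some interval with rational endpoints, and such an
  interval determines \<open>\<gamma>\<close>: if \<open>\<gamma> < \<gamma>'\<close> both had this property, \<open>\<alpha>\<close> would satisfy the
  Diophantine condition with constant \<open>\<gamma>'\<close> while a right neighbourhood \<open>(\<alpha>, \<alpha> + t)\<close>,
  \<open>t \<approx> N\<^sup>-\<^sup>2\<close>, is covered by the intervals of radius \<open>\<gamma> / q\<^sup>\<tau>\<^sup>+\<^sup>1\<close> around the fractions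
  \<open>p / q\<close>. Fractions with \<open>q \<le> N\<close> lying so close to \<open>\<alpha>\<close> all coincide, and the gap
  \<open>\<gamma>' - \<gamma>\<close> keeps their interval at a distance from \<open>\<alpha>\<close> comparable to its radius, so the
  part of the neighbourhood it misses lies in the union of the intervals with \<open>q > N\<close>, which
  has measure \<open>O(N\<^sup>-\<^sup>\<tau>)\<close>. For \<open>\<tau> > 2\<close> this is absurd for large \<open>N\<close>. Hence only countably
  many \<open>\<gamma>\<close> give a non-perfect set. The argument only uses \<open>\<tau> > 2\<close>.
\<close>

section \<open>Diophantine numbers\<close>

definition diophantine :: "real \<Rightarrow> real \<Rightarrow> real \<Rightarrow> bool" where
  "diophantine g \<tau> x \<longleftrightarrow>
     (\<forall>q::nat. q \<ge> 1 \<longrightarrow> (\<forall>p::int. g / real q powr (\<tau> + 1) \<le> \<bar>x - of_int p / real q\<bar>))"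

lemma dist_int_ge_iff: "r \<le> dist_int y \<longleftrightarrow> (\<forall>p::int. r \<le> \<bar>y - of_int p\<bar>)"
proof -
  have "bdd_below (range (\<lambda>p::int. \<bar>y - of_int p\<bar>))"
    by (rule bdd_belowI2[where m = 0]) simp
  then show ?thesis
    unfolding dist_int_def by (simp add: le_cINF_iff)
qed

lemma diophantine_condition_scaled:
  assumes "q \<ge> 1"
  shows "g / real q powr (\<tau> + 1) \<le> \<bar>x - of_int p / real q\<bar>
    \<longleftrightarrow> g / real q powr \<tau> \<le> \<bar>real q * x - of_int p\<bar>"
proof -
  have "g / real q powr (\<tau> + 1) = (g / real q powr \<tau>) / real q"
    using assms by (simp add: powr_add)
  moreover have "\<bar>x - of_int p / real q\<bar> = \<bar>real q * x - of_int p\<bar> / real q"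
    using assms by (simp add: field_simps)
  moreover have "real q > 0"
    using assms by simp
  ultimately show ?thesis
    by (metis divide_le_cancel less_asym)
qed

lemma Dset_eq: "Dset \<gamma> \<tau> = {\<alpha>. 0 < \<alpha> \<and> \<alpha> < 1 \<and> diophantine \<gamma> \<tau> \<alpha>}"
  unfolding Dset_def diophantine_def dist_int_ge_iff
  by (simp add: diophantine_condition_scaled)

lemma diophantine_antimono:
  assumes "g \<le> g'" "diophantine g' \<tau> x"
  shows "diophantine g \<tau> x"
  using assms unfolding diophantine_def
  by (meson divide_right_mono order.trans powr_ge_zero)

lemma Dset_antimono: "g \<le> g' \<Longrightarrow> Dset g' \<tau> \<subseteq> Dset g \<tau>"
  unfolding Dset_eq using diophantine_antimono by blast

lemma closed_diophantine: "closed {x. diophantine g \<tau> x}"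
  unfolding diophantine_def
  by (intro closed_Collect_all closed_Collect_imp closed_Collect_le continuous_intros) auto

lemma rational_not_diophantine:
  assumes "r \<in> \<rat>" "g > 0"
  shows "\<not> diophantine g \<tau> r"
proof
  obtain p d :: int where "d > 0" "r = of_int p / of_int d"
    using assms(1) by (metis Rats_cases')
  then have q: "nat d \<ge> 1" "r = of_int p / real (nat d)" "real (nat d) > 0"
    by auto
  assume "diophantine g \<tau> r"
  then have "g / real (nat d) powr (\<tau> + 1) \<le> \<bar>r - of_int p / real (nat d)\<bar>"
    using q(1) unfolding diophantine_def by blast
  moreover have "g / real (nat d) powr (\<tau> + 1) > 0"
    using q(3) assms(2) by simp
  ultimately show False
    using q(2,3) by simp
qed

lemma closed_Dset:
  assumes "\<gamma> > 0"
  shows "closed (Dset \<gamma> \<tau>)"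
proof -
  have "\<not> diophantine \<gamma> \<tau> 0" "\<not> diophantine \<gamma> \<tau> 1"
    using rational_not_diophantine assms by auto
  then have "Dset \<gamma> \<tau> = {0..1} \<inter> {x. diophantine \<gamma> \<tau> x}"
    unfolding Dset_eq by (auto simp: less_le)
  then show ?thesis
    using closed_diophantine by auto
qed

lemma totally_disconnected_Dset:
  assumes "\<gamma> > 0"
  shows "totally_disconnected (Dset \<gamma> \<tau>)"
  unfolding totally_disconnected_def
proof (intro allI impI)
  fix S assume S: "S \<subseteq> Dset \<gamma> \<tau> \<and> connected S"
  show "\<exists>a. S \<subseteq> {a}"
  proof (rule ccontr)
    assume "\<nexists>a. S \<subseteq> {a}"
    then obtain a b where "a \<in> S" "b \<in> S" "a < b"
      by (metis insertI1 linorder_neqE_linordered_idom subsetI)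
    moreover obtain r where "r \<in> \<rat>" "a < r" "r < b"
      using Rats_dense_in_real \<open>a < b\<close> by blast
    ultimately have "r \<in> Dset \<gamma> \<tau>"
      using S connected_contains_Icc[of S a b] by (meson atLeastAtMost_iff less_imp_le subsetD)
    then show False
      using rational_not_diophantine[OF \<open>r \<in> \<rat>\<close> assms] unfolding Dset_eq by blast
  qed
qed

section \<open>Fractions with large denominators\<close>

lemma card_integers_in_interval:
  fixes a L :: real
  assumes "L \<ge> 0"
  shows "finite {p::int. a < of_int p \<and> of_int p < a + L}"
    and "real (card {p::int. a < of_int p \<and> of_int p < a + L}) \<le> L + 1"
proof -
  let ?S = "{p::int. a < of_int p \<and> of_int p < a + L}"
  have sub: "?S \<subseteq> {\<lfloor>a\<rfloor> + 1 .. \<lceil>a + L\<rceil> - 1}"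
  proof
    fix p assume "p \<in> ?S"
    then have "\<lfloor>a\<rfloor> < p" "p < \<lceil>a + L\<rceil>"
      by (simp_all add: floor_less_iff less_ceiling_iff)
    then show "p \<in> {\<lfloor>a\<rfloor> + 1 .. \<lceil>a + L\<rceil> - 1}"
      by simp
  qed
  then show "finite ?S"
    using finite_subset by blast
  have "card ?S \<le> nat (\<lceil>a + L\<rceil> - 1 - \<lfloor>a\<rfloor>)"
    using card_mono[OF _ sub] by simp
  moreover have "\<lceil>a + L\<rceil> - 1 - \<lfloor>a\<rfloor> \<le> L + 1"
    by linarith
  ultimately show "real (card ?S) \<le> L + 1"
    using assms by linarith
qed

lemma sum_inverse_squares_le:
  assumes "M \<ge> 1"
  shows "(\<Sum>q\<in>{M..<n}. 1 / real q ^ 2) \<le> 2 / real M"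
proof -
  have "(\<Sum>q\<in>{M..<n}. 1 / real q ^ 2) \<le> 2 / real M - 2 / real (max n M)"
  proof (induction n)
    case 0
    then show ?case by simp
  next
    case (Suc n)
    show ?case
    proof (cases "M \<le> n")
      case True
      then have n: "real n \<ge> 1"
        using assms by simp
      have "1 / real n ^ 2 = 2 / (2 * real n * real n)"
        by (simp add: power2_eq_square)
      also have "\<dots> \<le> 2 / (real n * (real n + 1))"
        using n by (intro divide_left_mono mult_pos_pos) (auto simp: algebra_simps)
      also have "\<dots> = 2 / real n - 2 / real (Suc n)"
        using n by (simp add: field_simps)
      finally have "1 / real n ^ 2 \<le> 2 / real n - 2 / real (Suc n)" .
      then show ?thesis
        using Suc True by (simp add: atLeastLessThanSuc max_def)
    next
      case False
      then show ?thesis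
        using Suc by (simp add: atLeastLessThanSuc max_def)
    qed
  qed
  also have "\<dots> \<le> 2 / real M"
    by simp
  finally show ?thesis .
qed

lemma powr_split_power:
  fixes x a :: real
  assumes "0 < x"
  shows "x powr a = x powr (a - real n) * x ^ n"
proof -
  have "x powr a = x powr ((a - real n) + real n)"
    by simp
  also have "\<dots> = x powr (a - real n) * x ^ n"
    using assms by (simp only: powr_add powr_realpow)
  finally show ?thesis .
qed

lemma large_denominator_term_le:
  fixes N q g \<tau> :: real
  assumes N: "1 \<le> N" "N < q" and "2 < \<tau>" "0 < g"
  shows "(q / N^2 + 1) * (2 * g / q powr (\<tau> + 1)) \<le> 4 * g * N / N powr \<tau> / q^2"
proof -
  define A where "A = q powr (\<tau> - 2)"
  define a where "a = N powr (\<tau> - 2)"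
  have q: "q > 0"
    using N by linarith
  have a: "0 < a" "a \<le> A"
    unfolding a_def A_def using assms by (simp_all add: powr_mono2)
  have q_powr: "q powr (\<tau> + 1) = A * q^3"
    unfolding A_def using powr_split_power[OF q, of "\<tau> + 1" 3] by simp
  have N_powr: "N powr \<tau> = a * N^2"
    unfolding a_def using powr_split_power[of N \<tau> 2] N by simp
  have "q + N^2 \<le> 2 * N * q"
  proof -
    have "1 * q \<le> N * q" "N * N \<le> N * q"
      using N by (intro mult_right_mono mult_left_mono; simp)+
    then show ?thesis
      by (simp add: power2_eq_square)
  qed
  have "(q / N^2 + 1) * (2 * g / q powr (\<tau> + 1)) = 2 * g * (q + N^2) / (N^2 * A * q^3)"
    unfolding q_powr using N q by (simp add: field_simps)
  also have "\<dots> \<le> 2 * g * (q + N^2) / (N^2 * a * q^3)"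
    using a q N assms(4) by (intro divide_left_mono mult_mono mult_pos_pos) auto
  also have "\<dots> \<le> 2 * g * (2 * N * q) / (N^2 * a * q^3)"
    using \<open>q + N^2 \<le> 2 * N * q\<close> a q N assms(4) by (intro divide_right_mono) auto
  also have "\<dots> = 4 * g * N / N powr \<tau> / q^2"
    unfolding N_powr using N q a by (simp add: field_simps power2_eq_square power3_eq_cube)
  finally show ?thesis .
qed

definition large_denominator_cover :: "real \<Rightarrow> real \<Rightarrow> real \<Rightarrow> real \<Rightarrow> real \<Rightarrow> real set" where
  "large_denominator_cover g \<tau> N a L =
     (\<Union>q\<in>{q::nat. N < real q}. \<Union>p\<in>{p::int. a < of_int p / real q \<and> of_int p / real q < a + L}.
        ball (of_int p / real q) (g / real q powr (\<tau> + 1)))"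

lemma open_large_denominator_cover: "open (large_denominator_cover g \<tau> N a L)"
  unfolding large_denominator_cover_def by auto

lemma emeasure_fraction_balls_le:
  fixes q :: nat
  assumes "2 < \<tau>" "0 < g" "1 \<le> N" "N < real q" "0 \<le> L" "L \<le> 1 / N^2"
  shows "emeasure lborel (\<Union>p\<in>{p::int. a < of_int p / real q \<and> of_int p / real q < a + L}.
      ball (of_int p / real q) (g / real q powr (\<tau> + 1)))
    \<le> ennreal (4 * g * N / N powr \<tau> / real q ^ 2)"
proof -
  define w where "w = g / real q powr (\<tau> + 1)"
  define P where "P = {p::int. real q * a < of_int p \<and> of_int p < real q * a + real q * L}"
  have q: "real q > 0"
    using assms(3,4) by linarith
  have w: "w > 0"
    unfolding w_def using q assms(2) by simp
  have P_eq: "{p::int. a < of_int p / real q \<and> of_int p / real q < a + L} = P"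
    unfolding P_def using q by (auto simp: field_simps)
  have P: "finite P" "real (card P) \<le> real q * L + 1"
    unfolding P_def using card_integers_in_interval[of "real q * L" "real q * a"] assms(5) q by auto
  have "real q * L \<le> real q / N^2"
    using assms(6) q by (simp add: mult_left_mono divide_inverse)
  then have card_P: "real (card P) \<le> real q / N^2 + 1"
    using P by linarith
  have "emeasure lborel (\<Union>p\<in>P. ball (of_int p / real q) w)
      \<le> (\<Sum>p\<in>P. emeasure lborel (ball (of_int p / real q) w))"
    using P by (intro emeasure_subadditive_finite) auto
  also have "\<dots> = ennreal (real (card P) * (2 * w))"
    using w by (simp add: ball_eq_greaterThanLessThan ennreal_of_nat_eq_real_of_nat ennreal_mult)
  also have "\<dots> \<le> ennreal ((real q / N^2 + 1) * (2 * w))"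
    using card_P w by (intro ennreal_leI mult_right_mono) auto
  also have "\<dots> \<le> ennreal (4 * g * N / N powr \<tau> / real q ^ 2)"
    using large_denominator_term_le[OF assms(3,4,1,2)]
    unfolding w_def by (intro ennreal_leI) (simp add: mult.assoc)
  finally show ?thesis
    unfolding P_eq w_def .
qed

lemma emeasure_large_denominator_cover_le:
  assumes "2 < \<tau>" "0 < g" "1 \<le> N" "0 \<le> L" "L \<le> 1 / N^2"
  shows "emeasure lborel (large_denominator_cover g \<tau> N a L) \<le> ennreal (8 * g / N powr \<tau>)"
proof -
  define C where "C = 4 * g * N / N powr \<tau>"
  define M where "M = nat \<lfloor>N\<rfloor> + 1"
  define f where "f q = (if M \<le> q then C / real q ^ 2 else 0)" for q :: nat
  define B where "B q = (if M \<le> q then \<Union>p\<in>{p::int. a < of_int p / real q \<and> of_int p / real q < a + L}.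
      ball (of_int p / real q) (g / real q powr (\<tau> + 1)) else {})" for q :: nat
  have C: "0 \<le> C"
    unfolding C_def using assms by simp
  have M: "1 \<le> M" "N < real M"
    unfolding M_def using assms(3) by linarith+
  have large_iff: "N < real q \<longleftrightarrow> M \<le> q" for q
    unfolding M_def using assms(3) by linarith
  have B_le: "emeasure lborel (B q) \<le> ennreal (f q)" for q
    using emeasure_fraction_balls_le[OF assms(1-3) _ assms(4,5), of q a]
    unfolding B_def f_def C_def large_iff by simp
  have partial_sums: "(\<Sum>q<n. f q) \<le> 8 * g / N powr \<tau>" for n
  proof -
    have "{..<n} \<inter> {q. M \<le> q} = {M..<n}"
      by auto
    then have "(\<Sum>q<n. f q) = C * (\<Sum>q\<in>{M..<n}. 1 / real q ^ 2)"
      unfolding f_def by (simp add: sum.If_cases sum_distrib_left)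
    also have "\<dots> \<le> C * (2 / real M)"
      using sum_inverse_squares_le[OF M(1)] C by (intro mult_left_mono)
    also have "\<dots> \<le> C * (2 / N)"
      using M assms(3) C by (intro mult_left_mono divide_left_mono) auto
    also have "\<dots> = 8 * g / N powr \<tau>"
      unfolding C_def using assms(3) by (simp add: field_simps)
    finally show ?thesis .
  qed
  have "large_denominator_cover g \<tau> N a L = (\<Union>q. B q)"
    unfolding large_denominator_cover_def B_def large_iff by auto
  moreover have "range B \<subseteq> sets lborel"
    unfolding B_def by auto
  ultimately have "emeasure lborel (large_denominator_cover g \<tau> N a L) \<le> (\<Sum>q. emeasure lborel (B q))"
    by (metis emeasure_subadditive_countably)
  also have "\<dots> \<le> ennreal (8 * g / N powr \<tau>)"
  proof (intro suminf_le_const summableI)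
    fix n
    have "(\<Sum>q<n. emeasure lborel (B q)) \<le> (\<Sum>q<n. ennreal (f q))"
      by (intro sum_mono B_le)
    also have "\<dots> = ennreal (\<Sum>q<n. f q)"
      using C by (simp add: f_def)
    also have "\<dots> \<le> ennreal (8 * g / N powr \<tau>)"
      using partial_sums by (intro ennreal_leI)
    finally show "(\<Sum>q<n. emeasure lborel (B q)) \<le> ennreal (8 * g / N powr \<tau>)" .
  qed
  finally show ?thesis .
qed

lemma interval_length_le_emeasure:
  assumes "{a<..<b} \<subseteq> A" "A \<in> sets lborel" "emeasure lborel A \<le> ennreal s" "0 \<le> s"
  shows "b - a \<le> s"
proof (cases "a \<le> b")
  case True
  then have "ennreal (b - a) \<le> emeasure lborel A"
    using assms(1,2) emeasure_mono[of "{a<..<b}" A lborel] by simp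
  then show ?thesis
    using assms(3,4) by (simp add: ennreal_le_iff[symmetric] del: ennreal_le_iff)
qed (use assms in simp)

section \<open>Rational approximations to the right of a Diophantine point\<close>

lemma approximating_fraction_location:
  fixes g1 g2 \<alpha> x t :: real and q :: nat and p :: int
  assumes "diophantine g2 \<tau> \<alpha>" "q \<ge> 1" "g1 < g2" "\<alpha> < x" "x < \<alpha> + t"
    and "\<bar>x - of_int p / real q\<bar> < g1 / real q powr (\<tau> + 1)"
  shows "\<alpha> + (g2 - g1) / real q powr (\<tau> + 1) \<le> of_int p / real q - g1 / real q powr (\<tau> + 1)"
    and "(g2 - g1) / real q powr (\<tau> + 1) < t"
    and "\<alpha> < of_int p / real q"
    and "of_int p / real q < \<alpha> + g2 / (g2 - g1) * t"
proof -
  define v where "v = of_int p / real q"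
  define P where "P = real q powr (\<tau> + 1)"
  have P: "P > 0"
    unfolding P_def using assms(2) by simp
  have far: "g2 / P \<le> \<bar>\<alpha> - v\<bar>"
    using assms(1,2) unfolding diophantine_def v_def P_def by blast
  have near: "\<bar>x - v\<bar> < g1 / P"
    using assms(6) unfolding v_def P_def .
  have "0 < g1 / P"
    using near by (meson abs_ge_zero le_less_trans)
  then have "0 < g1"
    using P by (simp add: zero_less_divide_iff)
  have "g1 / P < g2 / P"
    using P assms(3) by (simp add: divide_strict_right_mono)
  then show "\<alpha> < v"
    using far near assms(4) by auto
  then show gap: "\<alpha> + (g2 - g1) / P \<le> v - g1 / P"
    using far by (simp add: diff_divide_distrib)
  then show gap_lt: "(g2 - g1) / P < t"
    using near assms(5) by (simp add: abs_less_iff)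
  have "g1 / P = g1 / (g2 - g1) * ((g2 - g1) / P)"
    using assms(3) by simp
  also have "\<dots> \<le> g1 / (g2 - g1) * t"
    using gap_lt assms(3) \<open>0 < g1\<close> by (intro mult_left_mono) auto
  finally have "v < \<alpha> + t + g1 / (g2 - g1) * t"
    using near assms(5) by (simp add: abs_less_iff)
  moreover have "t + g1 / (g2 - g1) * t = g2 / (g2 - g1) * t"
    using assms(3) by (simp add: field_simps)
  ultimately show "v < \<alpha> + g2 / (g2 - g1) * t"
    by linarith
qed

lemma fraction_separation:
  fixes N :: real and p p' :: int and q q' :: nat
  assumes "1 \<le> q" "1 \<le> q'" "real q \<le> N" "real q' \<le> N"
    and "of_int p / real q \<noteq> of_int p' / real q'"
  shows "1 / N^2 \<le> \<bar>of_int p / real q - of_int p' / real q'\<bar>"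
proof -
  have "p * int q' \<noteq> p' * int q"
  proof
    assume "p * int q' = p' * int q"
    then have "of_int p * real q' = of_int p' * real q"
      by (metis of_int_mult of_int_of_nat_eq)
    then show False
      using assms by (simp add: field_simps)
  qed
  then have num: "1 \<le> \<bar>real_of_int (p * int q' - p' * int q)\<bar>"
    by linarith
  have "real q * real q' \<le> N^2"
    using assms by (simp add: power2_eq_square mult_mono)
  then have "1 / N^2 \<le> 1 / (real q * real q')"
    using assms by (intro divide_left_mono mult_pos_pos) auto
  also have "\<dots> \<le> \<bar>real_of_int (p * int q' - p' * int q)\<bar> / (real q * real q')"
    using num assms by (intro divide_right_mono) auto
  also have "\<dots> = \<bar>of_int p / real q - of_int p' / real q'\<bar>"
    using assms by (simp add: field_simps)
  finally show ?thesis .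
qed

lemma non_diophantine_point_cases:
  fixes g1 g2 \<alpha> t x N :: real
  assumes "g1 < g2" "diophantine g2 \<tau> \<alpha>" "\<alpha> < x" "x < \<alpha> + t" "\<not> diophantine g1 \<tau> x"
  obtains "x \<in> large_denominator_cover g1 \<tau> N \<alpha> (g2 / (g2 - g1) * t)"
    | q p where "1 \<le> q" "real q \<le> N" "\<bar>x - of_int p / real q\<bar> < g1 / real q powr (\<tau> + 1)"
proof -
  obtain q :: nat and p :: int
    where q: "1 \<le> q" and p: "\<bar>x - of_int p / real q\<bar> < g1 / real q powr (\<tau> + 1)"
    using assms(5) unfolding diophantine_def by (auto simp: not_le)
  show ?thesis
  proof (cases "real q \<le> N")
    case True
    then show ?thesis
      using that(2) q p by blast
  next
    case False
    note location = approximating_fraction_location[OF assms(2) q assms(1,3,4) p]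
    have "x \<in> large_denominator_cover g1 \<tau> N \<alpha> (g2 / (g2 - g1) * t)"
      using False p location(3,4) unfolding large_denominator_cover_def
      by (force simp: dist_real_def abs_minus_commute)
    then show ?thesis
      by (rule that(1))
  qed
qed

lemma small_denominator_ball_subset:
  fixes g1 g2 \<alpha> t N x x0 :: real and p p0 :: int and q q0 :: nat
  assumes "0 \<le> \<tau>" "0 < g1" "g1 < g2" "g2 / (g2 - g1) * t \<le> 1 / N^2" "diophantine g2 \<tau> \<alpha>"
    and q: "1 \<le> q0" "q0 \<le> q" "real q \<le> N"
    and x0: "\<alpha> < x0" "x0 < \<alpha> + t" "\<bar>x0 - of_int p0 / real q0\<bar> < g1 / real q0 powr (\<tau> + 1)"
    and x: "\<alpha> < x" "x < \<alpha> + t" "\<bar>x - of_int p / real q\<bar> < g1 / real q powr (\<tau> + 1)"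
  shows "ball (of_int p / real q) (g1 / real q powr (\<tau> + 1))
    \<subseteq> ball (of_int p0 / real q0) (g1 / real q0 powr (\<tau> + 1))"
proof -
  have q1: "1 \<le> q"
    using q by simp
  note location0 = approximating_fraction_location(3,4)[OF assms(5) q(1) assms(3) x0]
  note location = approximating_fraction_location(3,4)[OF assms(5) q1 assms(3) x]
  have "\<bar>of_int p / real q - of_int p0 / real q0\<bar> < 1 / N^2"
    using location0 location assms(4) by (simp add: abs_less_iff)
  then have "of_int p / real q = of_int p0 / real q0"
    using fraction_separation[OF q1 q(1) q(3)] q by fastforce
  moreover have "g1 / real q powr (\<tau> + 1) \<le> g1 / real q0 powr (\<tau> + 1)"
    using q assms(1,2) by (intro divide_left_mono powr_mono2 mult_pos_pos) auto
  ultimately show ?thesis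
    by (simp add: subset_ball)
qed

lemma right_neighbourhood_cover:
  fixes g1 g2 \<alpha> t N \<tau> :: real
  defines "T \<equiv> large_denominator_cover g1 \<tau> N \<alpha> (g2 / (g2 - g1) * t)"
  assumes "0 \<le> \<tau>" "0 < g1" "g1 < g2" "0 < t" and separated: "g2 / (g2 - g1) * t \<le> 1 / N^2"
    and \<alpha>: "diophantine g2 \<tau> \<alpha>"
    and covered: "\<And>x. \<alpha> < x \<Longrightarrow> x < \<alpha> + t \<Longrightarrow> \<not> diophantine g1 \<tau> x"
  shows "\<exists>v r s. 0 \<le> r \<and> 0 < s \<and> r \<le> g1 / (g2 - g1) * s
    \<and> {\<alpha><..<\<alpha> + s} \<subseteq> T \<and> {\<alpha><..<\<alpha> + t} \<subseteq> ball v r \<union> T"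
proof -
  define w where "w q = g1 / real q powr (\<tau> + 1)" for q :: nat
  define small where "small q \<longleftrightarrow> 1 \<le> q \<and> real q \<le> N \<and>
      (\<exists>p x. \<alpha> < x \<and> x < \<alpha> + t \<and> \<bar>x - of_int p / real q\<bar> < w q)" for q :: nat
  show ?thesis
  proof (cases "\<exists>q. small q")
    case False
    have "{\<alpha><..<\<alpha> + t} \<subseteq> ball 0 0 \<union> T"
    proof
      fix x assume "x \<in> {\<alpha><..<\<alpha> + t}"
      then show "x \<in> ball 0 0 \<union> T"
        using non_diophantine_point_cases[OF \<open>g1 < g2\<close> \<alpha> _ _ covered] False
        unfolding T_def small_def w_def by (metis UnI2 greaterThanLessThan_iff)
    qed
    then show ?thesis
      using assms by (intro exI[of _ 0] exI[of _ 0] exI[of _ t]) auto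
  next
    case True
    define q0 where "q0 = (LEAST q. small q)"
    obtain p0 x0 where q0: "1 \<le> q0" "real q0 \<le> N"
      and x0: "\<alpha> < x0" "x0 < \<alpha> + t" "\<bar>x0 - of_int p0 / real q0\<bar> < w q0"
      using LeastI_ex[of small] True unfolding q0_def small_def by blast
    define v0 where "v0 = of_int p0 / real q0"
    define s0 where "s0 = (g2 - g1) / real q0 powr (\<tau> + 1)"
    note location = approximating_fraction_location[OF \<alpha> q0(1) \<open>g1 < g2\<close> x0[unfolded w_def]]
    have cover_t: "{\<alpha><..<\<alpha> + t} \<subseteq> ball v0 (w q0) \<union> T"
    proof
      fix x assume x: "x \<in> {\<alpha><..<\<alpha> + t}"
      then consider "x \<in> T"
        | q p where "1 \<le> q" "real q \<le> N" "\<bar>x - of_int p / real q\<bar> < w q"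
        using non_diophantine_point_cases[OF \<open>g1 < g2\<close> \<alpha> _ _ covered] unfolding T_def w_def
        by (metis greaterThanLessThan_iff)
      then show "x \<in> ball v0 (w q0) \<union> T"
      proof cases
        case (2 q p)
        then have "q0 \<le> q"
          unfolding q0_def using x by (intro Least_le) (auto simp: small_def)
        then have "ball (of_int p / real q) (w q) \<subseteq> ball v0 (w q0)"
          unfolding w_def v0_def using 2 x x0 assms(2-4) separated \<alpha> q0
          by (intro small_denominator_ball_subset) (auto simp: w_def)
        then show ?thesis
          using 2(3) by (auto simp: dist_real_def abs_minus_commute)
      qed simp
    qed
    moreover have "{\<alpha><..<\<alpha> + s0} \<subseteq> T"
    proof
      fix x assume x: "x \<in> {\<alpha><..<\<alpha> + s0}"
      then have "x \<notin> ball v0 (w q0)" "x < \<alpha> + t"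
        using location(1,2) unfolding s0_def v0_def w_def by (auto simp: dist_real_def)
      then show "x \<in> T"
        using x cover_t by auto
    qed
    moreover have "0 < s0" "w q0 = g1 / (g2 - g1) * s0"
      unfolding s0_def w_def using q0 assms(4) by simp_all
    ultimately show ?thesis
      using assms(3,4) by (intro exI[of _ v0] exI[of _ "w q0"] exI[of _ s0]) auto
  qed
qed

lemma right_neighbourhood_length_le:
  fixes g1 g2 \<alpha> t N \<tau> :: real
  assumes "2 < \<tau>" "0 < g1" "g1 < g2" "0 < t" "1 \<le> N" "g2 / (g2 - g1) * t \<le> 1 / N^2"
    and "diophantine g2 \<tau> \<alpha>"
    and "\<And>x. \<alpha> < x \<Longrightarrow> x < \<alpha> + t \<Longrightarrow> \<not> diophantine g1 \<tau> x"
  shows "t \<le> (1 + 2 * g1 / (g2 - g1)) * (8 * g1 / N powr \<tau>)"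
proof -
  define T where "T = large_denominator_cover g1 \<tau> N \<alpha> (g2 / (g2 - g1) * t)"
  define S where "S = 8 * g1 / N powr \<tau>"
  obtain v r s where r: "0 \<le> r" "r \<le> g1 / (g2 - g1) * s"
    and s: "{\<alpha><..<\<alpha> + s} \<subseteq> T" and t: "{\<alpha><..<\<alpha> + t} \<subseteq> ball v r \<union> T"
    using right_neighbourhood_cover[of \<tau> g1 g2 t N \<alpha>] assms unfolding T_def by auto
  have S: "0 \<le> S"
    unfolding S_def using assms by simp
  have T_sets: "T \<in> sets lborel"
    unfolding T_def using open_large_denominator_cover by simp
  have T_le: "emeasure lborel T \<le> ennreal S"
    unfolding T_def S_def using assms
    by (intro emeasure_large_denominator_cover_le) (auto intro: divide_nonneg_pos)
  have "s \<le> S"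
    using interval_length_le_emeasure[OF s T_sets T_le S] by simp
  have "emeasure lborel (ball v r \<union> T) \<le> emeasure lborel (ball v r) + emeasure lborel T"
    using T_sets by (intro emeasure_subadditive) auto
  also have "\<dots> \<le> ennreal (2 * r) + ennreal S"
    using r T_le by (intro add_mono) (auto simp: ball_eq_greaterThanLessThan)
  also have "\<dots> = ennreal (2 * r + S)"
    using r S by (simp add: ennreal_plus)
  finally have "t \<le> 2 * r + S"
    using interval_length_le_emeasure[OF t] T_sets r S by simp
  moreover have "g1 / (g2 - g1) * s \<le> g1 / (g2 - g1) * S"
    using \<open>s \<le> S\<close> assms(2,3) by (intro mult_left_mono) auto
  ultimately have "t \<le> 2 * (g1 / (g2 - g1) * S) + S"
    using r(2) by linarith
  also have "\<dots> = (1 + 2 * g1 / (g2 - g1)) * S"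
    by (simp add: algebra_simps)
  finally show ?thesis
    unfolding S_def .
qed

lemma diophantine_points_accumulate_right:
  fixes g1 g2 \<alpha> \<epsilon> \<tau> :: real
  assumes "2 < \<tau>" "0 < g1" "g1 < g2" "diophantine g2 \<tau> \<alpha>" "0 < \<epsilon>"
  shows "\<exists>x. \<alpha> < x \<and> x < \<alpha> + \<epsilon> \<and> diophantine g1 \<tau> x"
proof (rule ccontr)
  assume no_point: "\<nexists>x. \<alpha> < x \<and> x < \<alpha> + \<epsilon> \<and> diophantine g1 \<tau> x"
  define K where "K = g2 / (g2 - g1)"
  define C where "C = K * (1 + 2 * g1 / (g2 - g1)) * (8 * g1)"
  define N where "N = max (max 1 (sqrt (1 / (K * \<epsilon>)))) ((C + 1) powr (1 / (\<tau> - 2)))"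
  define t where "t = 1 / (K * N^2)"
  have K: "0 < K"
    unfolding K_def using assms(2,3) by simp
  have C: "0 < C"
    unfolding C_def using K assms(2,3) by (intro mult_pos_pos add_pos_pos) auto
  have N: "1 \<le> N" "sqrt (1 / (K * \<epsilon>)) \<le> N" "(C + 1) powr (1 / (\<tau> - 2)) \<le> N"
    unfolding N_def by auto
  then have "0 < N"
    by linarith
  have t: "0 < t" "K * t = 1 / N^2"
    unfolding t_def using K N by auto
  have "1 / (K * \<epsilon>) \<le> N^2"
    using N(2) K assms(5) real_sqrt_le_iff[of "1 / (K * \<epsilon>)" "N^2"] N(1) by simp
  then have "t \<le> \<epsilon>"
    unfolding t_def using K N(1) assms(5) by (simp add: field_simps)
  then have "t \<le> (1 + 2 * g1 / (g2 - g1)) * (8 * g1 / N powr \<tau>)"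
    using no_point t assms N(1) unfolding K_def
    by (intro right_neighbourhood_length_le[where \<alpha> = \<alpha>]) auto
  then have "N powr (\<tau> - 2) \<le> C"
    unfolding t_def C_def powr_split_power[OF \<open>0 < N\<close>, of \<tau> 2]
    using K \<open>0 < N\<close> by (simp add: field_simps)
  moreover have "C + 1 \<le> N powr (\<tau> - 2)"
  proof -
    have "((C + 1) powr (1 / (\<tau> - 2))) powr (\<tau> - 2) \<le> N powr (\<tau> - 2)"
      using N(3) assms(1) by (intro powr_mono2) auto
    then show ?thesis
      using assms(1) C by (simp add: powr_powr)
  qed
  ultimately show False
    by simp
qed

section \<open>Perfectness for almost every \<open>\<gamma>\<close>\<close>

lemma Dset_isolated_in_interval_unique:
  assumes "2 < \<tau>" "0 < \<gamma>" "0 < \<gamma>'"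
    and "Dset \<gamma> \<tau> \<inter> {a<..<b} = {\<alpha>}" "Dset \<gamma>' \<tau> \<inter> {a<..<b} = {\<alpha>'}"
  shows "\<gamma> = \<gamma>'"
proof -
  have False if g: "0 < g1" "g1 < g2"
    and isolated: "Dset g1 \<tau> \<inter> {a<..<b} = {\<alpha>1}" "Dset g2 \<tau> \<inter> {a<..<b} = {\<alpha>2}"
  for g1 g2 \<alpha>1 \<alpha>2
  proof -
    have \<alpha>2: "\<alpha>2 \<in> Dset g2 \<tau>" "a < \<alpha>2" "\<alpha>2 < b"
      using isolated(2) by auto
    then have "\<alpha>2 \<in> Dset g1 \<tau> \<inter> {a<..<b}"
      using Dset_antimono[of g1 g2 \<tau>] g(2) by auto
    then have "\<alpha>2 = \<alpha>1"
      using isolated(1) by simp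
    have "0 < \<alpha>2" "\<alpha>2 < 1" "diophantine g2 \<tau> \<alpha>2"
      using \<alpha>2(1) unfolding Dset_eq by auto
    then obtain x where x: "\<alpha>2 < x" "x < \<alpha>2 + min (b - \<alpha>2) (1 - \<alpha>2)" "diophantine g1 \<tau> x"
      using diophantine_points_accumulate_right[OF assms(1) g] \<alpha>2 by (metis diff_gt_0_iff_gt min_def)
    then have "x \<in> Dset g1 \<tau> \<inter> {a<..<b}"
      using \<alpha>2 \<open>0 < \<alpha>2\<close> unfolding Dset_eq by auto
    moreover have "x \<noteq> \<alpha>1"
      using x(1) \<open>\<alpha>2 = \<alpha>1\<close> by simp
    ultimately show False
      using isolated(1) by blast
  qed
  then show ?thesis
    using assms(2-5) by (metis linorder_neqE_linordered_idom)
qed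

lemma isolated_point_in_rational_interval:
  fixes X :: "real set"
  assumes "\<alpha> \<in> X" "\<not> \<alpha> islimpt X"
  obtains a b where "a \<in> \<rat>" "b \<in> \<rat>" "X \<inter> {a<..<b} = {\<alpha>}"
proof -
  obtain e where e: "0 < e" "\<forall>x\<in>X. x \<noteq> \<alpha> \<longrightarrow> \<not> dist x \<alpha> < e"
    using assms(2) unfolding islimpt_approachable by blast
  obtain a where a: "a \<in> \<rat>" "\<alpha> - e < a" "a < \<alpha>"
    using Rats_dense_in_real[of "\<alpha> - e" \<alpha>] e(1) by auto
  obtain b where b: "b \<in> \<rat>" "\<alpha> < b" "b < \<alpha> + e"
    using Rats_dense_in_real[of \<alpha> "\<alpha> + e"] e(1) by auto
  have "X \<inter> {a<..<b} = {\<alpha>}"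
  proof (intro equalityI subsetI)
    fix x assume x: "x \<in> X \<inter> {a<..<b}"
    then have "\<bar>x - \<alpha>\<bar> < e"
      using a b by (simp add: abs_less_iff)
    then show "x \<in> {\<alpha>}"
      using e(2) x by (auto simp: dist_real_def)
  qed (use assms(1) a b in simp)
  then show ?thesis
    by (rule that[OF a(1) b(1)])
qed

lemma countable_non_perfect_Dset:
  assumes "2 < \<tau>"
  shows "countable {\<gamma>. 0 < \<gamma> \<and> \<not> perfect_set (Dset \<gamma> \<tau>)}"
proof -
  define \<Gamma> where "\<Gamma> a b = {\<gamma>. 0 < \<gamma> \<and> (\<exists>\<alpha>. Dset \<gamma> \<tau> \<inter> {a<..<b} = {\<alpha>})}" for a b
  have "countable (\<Gamma> a b)" for a b
  proof (cases "\<Gamma> a b = {}")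
    case False
    then obtain \<gamma> where "\<gamma> \<in> \<Gamma> a b"
      by blast
    then have "\<Gamma> a b \<subseteq> {\<gamma>}"
      using Dset_isolated_in_interval_unique[OF assms] unfolding \<Gamma>_def by blast
    then show ?thesis
      by (rule countable_subset) simp
  qed simp
  then have "countable (\<Union>ab\<in>\<rat> \<times> \<rat>. \<Gamma> (fst ab) (snd ab))"
    by (intro countable_UN countable_SIGMA countable_rat)
  moreover have "{\<gamma>. 0 < \<gamma> \<and> \<not> perfect_set (Dset \<gamma> \<tau>)} \<subseteq> (\<Union>ab\<in>\<rat> \<times> \<rat>. \<Gamma> (fst ab) (snd ab))"
  proof
    fix \<gamma> assume "\<gamma> \<in> {\<gamma>. 0 < \<gamma> \<and> \<not> perfect_set (Dset \<gamma> \<tau>)}"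
    then obtain \<alpha> where \<gamma>: "0 < \<gamma>" and \<alpha>: "\<alpha> \<in> Dset \<gamma> \<tau>" "\<not> \<alpha> islimpt Dset \<gamma> \<tau>"
      unfolding perfect_set_def by blast
    obtain a b where "a \<in> \<rat>" "b \<in> \<rat>" "Dset \<gamma> \<tau> \<inter> {a<..<b} = {\<alpha>}"
      by (rule isolated_point_in_rational_interval[OF \<alpha>])
    then have "(a, b) \<in> \<rat> \<times> \<rat>" "\<gamma> \<in> \<Gamma> a b"
      using \<gamma> unfolding \<Gamma>_def by auto
    then show "\<gamma> \<in> (\<Union>ab\<in>\<rat> \<times> \<rat>. \<Gamma> (fst ab) (snd ab))"
      by force
  qed
  ultimately show ?thesis
    by (rule countable_subset[rotated])
qed

theorem mainTheorem1:
  fixes \<tau> :: real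
  assumes "\<tau> > (3 + sqrt 17) / 2"
  shows "AE \<gamma> in lborel. \<gamma> > 0 \<longrightarrow> cantor_set (Dset \<gamma> \<tau>)"
proof -
  have "1 < sqrt 17"
    by (rule real_less_rsqrt) simp
  moreover have "3 + sqrt 17 < 2 * \<tau>"
    using assms by (simp add: field_simps)
  ultimately have "2 < \<tau>"
    by linarith
  then have "AE \<gamma> in lborel. \<gamma> \<notin> {\<gamma>. 0 < \<gamma> \<and> \<not> perfect_set (Dset \<gamma> \<tau>)}"
    by (intro AE_not_in countable_imp_null_set_lborel countable_non_perfect_Dset)
  then show ?thesis
    by eventually_elim (auto simp: cantor_set_def closed_Dset totally_disconnected_Dset)
qed

end
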